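(* Let $\Omega\subset\mathbb R^d$ be a bounded Borel set, $f:\Omega\to[0,\infty)$ with $\int_\Omega f=1$, $p\ge1$, $x_1,x_2\in\Omega$, $h_1,h_2:[0,1]\to[0,\infty)$ continuous and non-decreasing, and $\kappa\in\mathbb N$, $\kappa\ge1$. Assume $G$ is Lipschitz with constant $L<\kappa$. Let $t_1,\dots,t_\kappa\in\mathbb R$ be arbitrary and define for $n\ge\kappa$ $$t_{n+1}=\frac1\kappa\sum_{m=n-\kappa+1}^nG(t_m),$$ and for $n>\kappa$ let $\psi_n(x)=0$ if $\tau(x)<t_n$ and $\psi_n(x)=1$ otherwise. Then $t_n\to\bar t$ and $\psi_n\to\bar\psi$ uniformly on every compact subset of $\Omega\setminus\{\tau=\bar t\}$.
   Context: $\tau(x)=|x-x_1|^p-|x-x_2|^p$, $m(t)=\int_{\{x\in\Omega:\tau(x)<t\}}f\,dx$, $G(t)=h_2(1-m(t))-h_1(m(t))$ (the difference between queue times at $x_2$ and $x_1$ when mass $m(t)$ goes to $x_1$). There is a unique $\bar t$ with $G(\bar t)=\bar t$, and $\bar\psi(x)=0$ if $\tau(x)<\bar t$, $\bar\psi(x)=1$ if $\tau(x)>\bar t$ (the unique equilibrium). *)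

theory Defs
  imports "HOL-Analysis.Analysis"
begin

definition tau :: "real \<Rightarrow> 'a::euclidean_space \<Rightarrow> 'a \<Rightarrow> 'a \<Rightarrow> real" where
  "tau p x1 x2 x = norm (x - x1) powr p - norm (x - x2) powr p"

definition mass :: "'a::euclidean_space set \<Rightarrow> ('a \<Rightarrow> real) \<Rightarrow> ('a \<Rightarrow> real) \<Rightarrow> real \<Rightarrow> real" where
  "mass \<Omega> f \<tau> t = (LINT x:{x\<in>\<Omega>. \<tau> x < t}|lebesgue. f x)"

definition Gfun :: "(real \<Rightarrow> real) \<Rightarrow> (real \<Rightarrow> real) \<Rightarrow> (real \<Rightarrow> real) \<Rightarrow> real \<Rightarrow> real" where
  "Gfun h1 h2 m t = h2 (1 - m t) - h1 (m t)"

end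

theory Submission
  imports Defs
begin

text \<open>For \<open>n > \<kappa>\<close> the recursion reads \<open>t (n+1) - t n = (G (t n) - G (t (n-\<kappa>))) / \<kappa>\<close>. Since \<open>G\<close>
  is non-increasing and \<open>L\<close>-Lipschitz with \<open>L < \<kappa>\<close>, a bound \<open>B\<close> on the last \<open>\<kappa>+1\<close> iterates
  bounds all later ones, and each step keeps at least the fraction \<open>1 - L/\<kappa>\<close> of the gap
  to \<open>B\<close>. Hence the window maxima decrease, the window minima increase (by the symmetry
  \<open>t \<mapsto> -t\<close>), and their difference contracts by the factor \<open>1 - (1 - L/\<kappa>)^(\<kappa>+1)\<close> every
  \<open>\<kappa>+1\<close> steps. So \<open>t\<close> converges, necessarily to a fixed point of \<open>G\<close>, which is unique since
  \<open>G\<close> is non-increasing. Once \<open>|t n - tbar|\<close> is below the distance from \<open>tbar\<close> to the compact set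
  \<open>\<tau>(K)\<close>, the threshold profiles agree with the limit profile on \<open>K\<close>.\<close>

lemma antimono_fixed_point_unique:
  fixes g :: "'a::linorder \<Rightarrow> 'a"
  assumes "antimono g" "g x = x" "g y = y"
  shows "x = y"
  using antimonoD[OF assms(1), of x y] antimonoD[OF assms(1), of y x] assms(2,3)
  by (metis linorder_le_cases order_antisym)

lemma LIMSEQ_moving_average:
  fixes f :: "nat \<Rightarrow> real"
  assumes lim: "f \<longlonglongrightarrow> l" and \<kappa>: "1 \<le> \<kappa>"
  shows "(\<lambda>n. (\<Sum>m\<in>{n + 1 - \<kappa>..n}. f m) / real \<kappa>) \<longlonglongrightarrow> l"
proof -
  have "(\<lambda>n. \<Sum>i<\<kappa>. f (n - i)) \<longlonglongrightarrow> (\<Sum>i<\<kappa>. l)"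
    by (intro tendsto_sum filterlim_compose[OF lim filterlim_minus_const_nat_at_top])
  then have "(\<lambda>n. (\<Sum>i<\<kappa>. f (n - i)) / real \<kappa>) \<longlonglongrightarrow> l"
    using \<kappa> by (auto intro: tendsto_eq_intros)
  moreover have "(\<Sum>i<\<kappa>. f (n - i)) = (\<Sum>m\<in>{n + 1 - \<kappa>..n}. f m)" if "\<kappa> \<le> n" for n
    by (rule sum.reindex_bij_witness[of _ "\<lambda>m. n - m" "\<lambda>i. n - i"]) (use that in auto)
  then have "\<forall>\<^sub>F n in sequentially.
      (\<Sum>i<\<kappa>. f (n - i)) / real \<kappa> = (\<Sum>m\<in>{n + 1 - \<kappa>..n}. f m) / real \<kappa>"
    by (intro eventually_sequentiallyI[of \<kappa>]) simp
  ultimately show ?thesis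
    by (rule Lim_transform_eventually)
qed

locale delayed_average =
  fixes G :: "real \<Rightarrow> real" and L :: real and \<kappa> :: nat and t :: "nat \<Rightarrow> real"
  assumes G_antimono: "antimono G"
    and G_lipschitz: "lipschitz_on L UNIV G"
    and \<kappa>: "1 \<le> \<kappa>" and L_less: "L < real \<kappa>"
    and recursion: "\<And>n. \<kappa> \<le> n \<Longrightarrow> t (Suc n) = (\<Sum>m\<in>{n + 1 - \<kappa>..n}. G (t m)) / real \<kappa>"
begin

text \<open>Turns every fact about upper bounds of \<open>t\<close> into one about lower bounds.\<close>

lemma reflected: "delayed_average (\<lambda>x. - G (- x)) L \<kappa> (\<lambda>n. - t n)"
proof
  show "antimono (\<lambda>x. - G (- x))"
    by (intro antimonoI) (simp add: antimonoD[OF G_antimono])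
  show "lipschitz_on L UNIV (\<lambda>x. - G (- x))"
  proof (rule lipschitz_onI)
    fix x y :: real
    show "dist (- G (- x)) (- G (- y)) \<le> L * dist x y"
      using lipschitz_onD[OF G_lipschitz, of "- x" "- y"] by (simp add: dist_real_def abs_minus_commute)
  qed (use G_lipschitz lipschitz_on_nonneg in blast)
  show "- t (Suc n) = (\<Sum>m\<in>{n + 1 - \<kappa>..n}. - G (- (- t m))) / real \<kappa>" if "\<kappa> \<le> n" for n
    using recursion[OF that] by (simp add: sum_negf)
qed (use \<kappa> L_less in auto)

lemma rate_pos: "0 < 1 - L / real \<kappa>"
  using L_less \<kappa> by simp

lemma rate_le_1: "1 - L / real \<kappa> \<le> 1"
  using G_lipschitz lipschitz_on_nonneg \<kappa> by fastforce

lemma increment: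
  assumes "Suc \<kappa> \<le> n"
  shows "t (Suc n) = t n + (G (t n) - G (t (n - \<kappa>))) / real \<kappa>"
proof -
  let ?g = "\<lambda>m. G (t m)"
  have "t n = sum ?g {n - \<kappa>..n - 1} / real \<kappa>"
    using recursion[of "n - 1"] assms by (simp add: Suc_diff_le)
  moreover have "sum ?g {n - \<kappa>..n} = ?g (n - \<kappa>) + sum ?g {n + 1 - \<kappa>..n}"
    using assms by (subst sum.atLeast_Suc_atMost) (auto simp: Suc_diff_le)
  moreover have "sum ?g {n - \<kappa>..n} = sum ?g {n - \<kappa>..n - 1} + ?g n"
  proof -
    have "Suc (n - 1) = n" using assms by simp
    then show ?thesis using sum.cl_ivl_Suc[of ?g "n - \<kappa>" "n - 1"] by simp
  qed
  ultimately show ?thesis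
    using recursion[of n] assms \<kappa> by (simp add: field_simps)
qed

lemma gap_step:
  assumes n: "Suc \<kappa> \<le> n" and "t n \<le> B" "t (n - \<kappa>) \<le> B"
  shows "(1 - L / real \<kappa>) * (B - t n) \<le> B - t (Suc n)"
proof (cases "t n \<le> t (n - \<kappa>)")
  case True
  have "G (t n) - G (t (n - \<kappa>)) \<le> L * (t (n - \<kappa>) - t n)"
    using lipschitz_onD[OF G_lipschitz, of "t n" "t (n - \<kappa>)"] True by (simp add: dist_real_def)
  also have "\<dots> \<le> L * (B - t n)"
    using assms G_lipschitz lipschitz_on_nonneg by (intro mult_left_mono) auto
  finally show ?thesis
    using increment[OF n] \<kappa> by (simp add: field_simps)
next
  case False
  then have "G (t n) \<le> G (t (n - \<kappa>))" using antimonoD[OF G_antimono] by simp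
  then have "(G (t n) - G (t (n - \<kappa>))) / real \<kappa> \<le> 0" by (simp add: divide_le_0_iff)
  moreover have "(1 - L / real \<kappa>) * (B - t n) \<le> B - t n"
    using assms rate_le_1 rate_pos by (intro mult_left_le_one_le) auto
  ultimately show ?thesis
    using increment[OF n] by linarith
qed

lemma upper_bound_persists:
  assumes n: "Suc \<kappa> \<le> n" and B: "\<And>m. m \<in> {n - \<kappa>..n} \<Longrightarrow> t m \<le> B" and j: "n - \<kappa> \<le> j"
  shows "t j \<le> B"
  using j
proof (induction j rule: less_induct)
  case (less j)
  show ?case
  proof (cases "j \<le> n")
    case True
    then show ?thesis using less.prems B by simp
  next
    case False
    then obtain i where i: "j = Suc i" "n \<le> i" by (cases j) auto
    have "t i \<le> B" "t (i - \<kappa>) \<le> B" using less.IH i by auto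
    then have "(1 - L / real \<kappa>) * (B - t i) \<le> B - t j"
      using gap_step[of i B] i n by simp
    moreover have "0 \<le> (1 - L / real \<kappa>) * (B - t i)"
      using rate_pos \<open>t i \<le> B\<close> by simp
    ultimately show ?thesis by simp
  qed
qed

lemma gap_decay:
  assumes n: "Suc \<kappa> \<le> n" and B: "\<And>m. m \<in> {n - \<kappa>..n} \<Longrightarrow> t m \<le> B"
  shows "(1 - L / real \<kappa>) ^ j * (B - t n) \<le> B - t (n + j)"
proof (induction j)
  case (Suc j)
  have "t (n + j) \<le> B" "t (n + j - \<kappa>) \<le> B"
    using upper_bound_persists[OF n B] by auto
  then have "(1 - L / real \<kappa>) * (B - t (n + j)) \<le> B - t (n + Suc j)"
    using gap_step[of "n + j" B] n by simp
  moreover have "(1 - L / real \<kappa>) ^ Suc j * (B - t n) \<le> (1 - L / real \<kappa>) * (B - t (n + j))"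
    using Suc.IH rate_pos by simp
  ultimately show ?case by linarith
qed simp

definition window_max :: "nat \<Rightarrow> real" where
  "window_max n = Max (t ` {n - \<kappa>..n})"

lemma le_window_max: "m \<in> {n - \<kappa>..n} \<Longrightarrow> t m \<le> window_max n"
  unfolding window_max_def by (intro Max_ge) auto

lemma window_max_attained: "\<exists>m\<in>{n - \<kappa>..n}. window_max n = t m"
proof -
  have "window_max n \<in> t ` {n - \<kappa>..n}"
    unfolding window_max_def by (intro Max_in) auto
  then show ?thesis by auto
qed

lemma window_max_antimono:
  assumes n: "Suc \<kappa> \<le> n" and "n \<le> m"
  shows "window_max m \<le> window_max n"
proof -
  obtain j where j: "j \<in> {m - \<kappa>..m}" "window_max m = t j"
    using window_max_attained by blast
  then have "n - \<kappa> \<le> j" using diff_le_mono[OF \<open>n \<le> m\<close>, of \<kappa>] by simp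
  with j(2) show ?thesis using upper_bound_persists[OF n le_window_max] by simp
qed

lemma window_max_drop:
  assumes n: "Suc \<kappa> \<le> n"
  shows "window_max (n + Suc \<kappa>) \<le>
    window_max n - (1 - L / real \<kappa>) ^ Suc \<kappa> * (window_max n - t n)"
proof -
  obtain m where m: "m \<in> {n + Suc \<kappa> - \<kappa>..n + Suc \<kappa>}" "window_max (n + Suc \<kappa>) = t m"
    using window_max_attained by blast
  define i where "i = m - n"
  have i: "m = n + i" "i \<le> Suc \<kappa>" using m(1) by (auto simp: i_def)
  have "(1 - L / real \<kappa>) ^ Suc \<kappa> * (window_max n - t n)
      \<le> (1 - L / real \<kappa>) ^ i * (window_max n - t n)"
    using i rate_pos rate_le_1 le_window_max[of n n]
    by (intro mult_right_mono power_decreasing) auto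
  also have "\<dots> \<le> window_max n - t m"
    using gap_decay[OF n le_window_max] i by simp
  finally show ?thesis using m by simp
qed

lemma iterates_convergent: "convergent t"
proof -
  interpret reflected: delayed_average "\<lambda>x. - G (- x)" L \<kappa> "\<lambda>n. - t n"
    by (fact reflected)
  define N where "N = Suc \<kappa>"
  define \<delta> where "\<delta> = (1 - L / real \<kappa>) ^ N"
  define b where "b k = window_max (k + N)" for k
  define r where "r k = reflected.window_max (k + N)" for k
  have t_between: "- r k \<le> t (k + N)" "t (k + N) \<le> b k" for k
    using le_window_max[of "k + N" "k + N"] reflected.le_window_max[of "k + N" "k + N"]
    by (auto simp: b_def r_def N_def)
  have "decseq b" "decseq r"
    using window_max_antimono reflected.window_max_antimono
    by (auto simp: decseq_def b_def r_def N_def)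
  moreover have "- r 0 \<le> b k" "- b 0 \<le> r k" for k
    using t_between[of k] antimonoD[OF \<open>decseq b\<close>, of 0 k] antimonoD[OF \<open>decseq r\<close>, of 0 k]
    by auto
  ultimately obtain \<beta> \<rho> where b_lim: "b \<longlonglongrightarrow> \<beta>" and r_lim: "r \<longlonglongrightarrow> \<rho>"
    by (metis decseq_convergent)
  text \<open>\<open>b k + r k\<close> is the width (maximum minus minimum) of the window ending at \<open>k + N\<close>.\<close>
  have width_step: "b (k + N) + r (k + N) \<le> (1 - \<delta>) * (b k + r k)" for k
  proof -
    have "b (k + N) \<le> b k - \<delta> * (b k - t (k + N))"
      using window_max_drop[of "k + N"] by (simp add: b_def \<delta>_def N_def)
    moreover have "r (k + N) \<le> r k - \<delta> * (r k + t (k + N))"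
      using reflected.window_max_drop[of "k + N"] by (simp add: r_def \<delta>_def N_def)
    moreover have "b k - \<delta> * (b k - t (k + N)) + (r k - \<delta> * (r k + t (k + N)))
        = (1 - \<delta>) * (b k + r k)"
      by (simp add: algebra_simps)
    ultimately show ?thesis by linarith
  qed
  have "(\<lambda>k. b (k + N) + r (k + N)) \<longlonglongrightarrow> \<beta> + \<rho>"
    using LIMSEQ_ignore_initial_segment[OF b_lim] LIMSEQ_ignore_initial_segment[OF r_lim]
    by (rule tendsto_add)
  moreover have "(\<lambda>k. (1 - \<delta>) * (b k + r k)) \<longlonglongrightarrow> (1 - \<delta>) * (\<beta> + \<rho>)"
    using b_lim r_lim by (intro tendsto_intros)
  ultimately have "\<beta> + \<rho> \<le> (1 - \<delta>) * (\<beta> + \<rho>)"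
    using width_step by (blast intro: LIMSEQ_le)
  then have "\<delta> * (\<beta> + \<rho>) \<le> 0"
    by (simp add: algebra_simps)
  moreover have "0 < \<delta>"
    using rate_pos by (simp add: \<delta>_def)
  moreover have "0 \<le> \<beta> + \<rho>"
  proof (rule LIMSEQ_le_const[OF tendsto_add[OF b_lim r_lim]])
    have "0 \<le> b k + r k" for k using t_between[of k] by linarith
    then show "\<exists>N. \<forall>k\<ge>N. 0 \<le> b k + r k" by blast
  qed
  ultimately have "\<rho> = - \<beta>"
    by (simp add: mult_le_0_iff)
  then have lower_lim: "(\<lambda>k. - r k) \<longlonglongrightarrow> \<beta>"
    using tendsto_minus[OF r_lim] by simp
  have "(\<lambda>k. t (k + N)) \<longlonglongrightarrow> \<beta>"
    using tendsto_sandwich[where g = "\<lambda>k. t (k + N)", OF _ _ lower_lim b_lim] t_between by simp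
  then show ?thesis
    by (rule convergentI[OF LIMSEQ_offset])
qed

lemma limit_is_fixed_point:
  assumes lim: "t \<longlonglongrightarrow> \<beta>"
  shows "G \<beta> = \<beta>"
proof -
  have "isCont G \<beta>"
    using lipschitz_on_continuous_on[OF G_lipschitz] by (simp add: continuous_on_eq_continuous_at)
  then have "(\<lambda>n. G (t n)) \<longlonglongrightarrow> G \<beta>"
    using lim by (rule isCont_tendsto_compose)
  then have "(\<lambda>n. (\<Sum>m\<in>{n + 1 - \<kappa>..n}. G (t m)) / real \<kappa>) \<longlonglongrightarrow> G \<beta>"
    using \<kappa> by (rule LIMSEQ_moving_average)
  then have "(\<lambda>n. t (Suc n)) \<longlonglongrightarrow> G \<beta>"
    by (rule Lim_transform_eventually[OF _ eventually_sequentiallyI[of \<kappa>]]) (simp add: recursion)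
  moreover have "(\<lambda>n. t (Suc n)) \<longlonglongrightarrow> \<beta>"
    using lim by (rule LIMSEQ_Suc)
  ultimately show ?thesis
    by (rule LIMSEQ_unique)
qed

theorem LIMSEQ_fixed_point:
  assumes "G s = s"
  shows "t \<longlonglongrightarrow> s"
proof -
  obtain \<beta> where lim: "t \<longlonglongrightarrow> \<beta>"
    using iterates_convergent by (auto simp: convergent_def)
  then have "\<beta> = s"
    using antimono_fixed_point_unique[OF G_antimono limit_is_fixed_point assms] by blast
  with lim show ?thesis by simp
qed

end

lemma set_integral_mono_set_nonneg:
  fixes f :: "'a \<Rightarrow> real"
  assumes f: "set_integrable M B f" and A: "A \<in> sets M" "A \<subseteq> B"
    and nonneg: "\<And>x. x \<in> B \<Longrightarrow> 0 \<le> f x"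
  shows "(LINT x:A|M. f x) \<le> (LINT x:B|M. f x)"
proof -
  have "set_integrable M A f" using set_integrable_subset[OF f A] .
  then show ?thesis
    using f A(2) nonneg unfolding set_integrable_def set_lebesgue_integral_def
    by (auto intro!: integral_mono split: split_indicator)
qed

context
  fixes \<Omega> :: "'a::euclidean_space set" and f :: "'a \<Rightarrow> real" and \<tau> :: "'a \<Rightarrow> real"
  assumes f_int: "set_integrable lebesgue \<Omega> f" and f_nonneg: "\<forall>x\<in>\<Omega>. 0 \<le> f x"
    and sublevel: "\<And>s. {x \<in> \<Omega>. \<tau> x < s} \<in> sets lebesgue"
begin

lemma mass_mono: "mono (mass \<Omega> f \<tau>)"
proof (rule monoI)
  fix s s' :: real assume "s \<le> s'"
  then show "mass \<Omega> f \<tau> s \<le> mass \<Omega> f \<tau> s'"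
    unfolding mass_def using f_nonneg sublevel
    by (intro set_integral_mono_set_nonneg set_integrable_subset[OF f_int]) auto
qed

lemma mass_nonneg: "0 \<le> mass \<Omega> f \<tau> s"
  using set_integral_mono_set_nonneg[of lebesgue "{x \<in> \<Omega>. \<tau> x < s}" f "{}"]
    set_integrable_subset[OF f_int sublevel] f_nonneg
  by (auto simp: mass_def set_lebesgue_integral_def)

lemma mass_le_total: "mass \<Omega> f \<tau> s \<le> (LINT x:\<Omega>|lebesgue. f x)"
  unfolding mass_def using f_int f_nonneg sublevel
  by (intro set_integral_mono_set_nonneg) auto

end

lemma antimono_Gfun:
  assumes h1: "mono_on {0..1} h1" and h2: "mono_on {0..1} h2"
    and m: "mono m" "\<And>s. m s \<in> {0..1}"
  shows "antimono (Gfun h1 h2 m)"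
proof (rule antimonoI)
  fix x y :: real assume "x \<le> y"
  with m(1) have "m x \<le> m y" by (rule monoD)
  then have "h1 (m x) \<le> h1 (m y)" "h2 (1 - m y) \<le> h2 (1 - m x)"
    using m(2)[of x] m(2)[of y] by (auto intro!: mono_onD[OF h1] mono_onD[OF h2])
  then show "Gfun h1 h2 m y \<le> Gfun h1 h2 m x" by (simp add: Gfun_def)
qed

lemma continuous_on_tau:
  assumes "0 < p"
  shows "continuous_on S (tau p x1 x2)"
proof -
  have "continuous_on S (\<lambda>x. norm (x - y) powr p)" for y :: 'a
    by (rule continuous_on_powr') (use assms in \<open>auto intro!: continuous_intros\<close>)
  then show ?thesis
    unfolding tau_def by (intro continuous_on_diff)
qed

lemma tau_sublevel_in_sets_lebesgue:
  assumes "0 < p" "\<Omega> \<in> sets borel"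
  shows "{x \<in> \<Omega>. tau p x1 x2 x < s} \<in> sets lebesgue"
proof -
  have "open {x. tau p x1 x2 x < s}"
    using continuous_on_tau[OF assms(1)] by (rule open_Collect_less) simp
  then have "\<Omega> \<inter> {x. tau p x1 x2 x < s} \<in> sets borel"
    using assms(2) by auto
  moreover have "{x \<in> \<Omega>. tau p x1 x2 x < s} = \<Omega> \<inter> {x. tau p x1 x2 x < s}"
    by blast
  ultimately show ?thesis
    by simp
qed

lemma uniform_limit_threshold_indicator:
  fixes \<tau> :: "'a::topological_space \<Rightarrow> real"
  assumes "continuous_on K \<tau>" "compact K" "\<forall>x\<in>K. \<tau> x \<noteq> s" "t \<longlonglongrightarrow> s"
  shows "uniform_limit K (\<lambda>n x. if \<tau> x < t n then (0::real) else 1)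
    (\<lambda>x. if \<tau> x < s then 0 else 1) sequentially"
proof -
  have "compact (\<tau> ` K)" using assms(1,2) by (rule compact_continuous_image)
  then have "closed (\<tau> ` K)" by (rule compact_imp_closed)
  moreover have "s \<notin> \<tau> ` K" using assms(3) by auto
  ultimately obtain \<delta> where \<delta>: "\<delta> > 0" "\<forall>y\<in>\<tau> ` K. \<delta> \<le> dist s y"
    by (metis separate_point_closed)
  have "\<forall>\<^sub>F n in sequentially. dist (t n) s < \<delta>"
    using assms(4) \<delta>(1) by (rule tendstoD)
  then have same: "\<forall>\<^sub>F n in sequentially. \<forall>x\<in>K. (\<tau> x < t n) = (\<tau> x < s)"
  proof eventually_elim
    case (elim n)
    show ?case
    proof
      fix x assume "x \<in> K"
      then have "\<delta> \<le> \<bar>\<tau> x - s\<bar>" using \<delta>(2) by (simp add: dist_real_def abs_minus_commute)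
      with elim show "(\<tau> x < t n) = (\<tau> x < s)" by (simp add: dist_real_def) arith
    qed
  qed
  show ?thesis
    unfolding uniform_limit_iff
  proof (intro allI impI)
    fix e :: real assume "0 < e"
    with same show "\<forall>\<^sub>F n in sequentially. \<forall>x\<in>K.
        dist (if \<tau> x < t n then (0::real) else 1) (if \<tau> x < s then 0 else 1) < e"
      by (auto elim: eventually_mono)
  qed
qed

theorem theorem5p9:
  fixes \<Omega> :: "'a::euclidean_space set" and f :: "'a \<Rightarrow> real"
    and p :: real and x1 x2 :: 'a and h1 h2 :: "real \<Rightarrow> real"
    and \<kappa> :: nat and L :: real and t :: "nat \<Rightarrow> real" and tbar :: real
  assumes \<Omega>_borel: "\<Omega> \<in> sets borel" and \<Omega>_bdd: "bounded \<Omega>"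
    and f_nonneg: "\<forall>x\<in>\<Omega>. 0 \<le> f x"
    and f_int: "set_integrable lebesgue \<Omega> f"
    and f_one: "(LINT x:\<Omega>|lebesgue. f x) = 1"
    and p: "p \<ge> 1"
    and x1: "x1 \<in> \<Omega>" and x2: "x2 \<in> \<Omega>"
    and h1_cont: "continuous_on {0..1} h1" and h1_mono: "mono_on {0..1} h1"
    and h1_nonneg: "\<forall>s\<in>{0..1}. 0 \<le> h1 s"
    and h2_cont: "continuous_on {0..1} h2" and h2_mono: "mono_on {0..1} h2"
    and h2_nonneg: "\<forall>s\<in>{0..1}. 0 \<le> h2 s"
    and \<kappa>: "\<kappa> \<ge> 1"
    and G_lip: "lipschitz_on L UNIV (Gfun h1 h2 (mass \<Omega> f (tau p x1 x2)))"
    and L_lt: "L < real \<kappa>"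
    and tbar: "Gfun h1 h2 (mass \<Omega> f (tau p x1 x2)) tbar = tbar"
    and rec: "\<forall>n\<ge>\<kappa>. t (Suc n) =
       (\<Sum>m\<in>{n + 1 - \<kappa>..n}. Gfun h1 h2 (mass \<Omega> f (tau p x1 x2)) (t m)) / real \<kappa>"
  shows "t \<longlonglongrightarrow> tbar \<and>
    (\<forall>K. compact K \<and> K \<subseteq> \<Omega> - {x. tau p x1 x2 x = tbar} \<longrightarrow>
       uniform_limit K
         (\<lambda>n x. if tau p x1 x2 x < t n then (0::real) else 1)
         (\<lambda>x. if tau p x1 x2 x < tbar then 0 else 1) sequentially)"
proof -
  have p_pos: "0 < p" using p by simp
  note sublevel = tau_sublevel_in_sets_lebesgue[OF p_pos \<Omega>_borel]
  have "antimono (Gfun h1 h2 (mass \<Omega> f (tau p x1 x2)))"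
    using mass_mono[OF f_int f_nonneg sublevel] mass_nonneg[OF f_int f_nonneg sublevel]
      mass_le_total[OF f_int f_nonneg sublevel] f_one
    by (intro antimono_Gfun h1_mono h2_mono) auto
  then interpret delayed_average "Gfun h1 h2 (mass \<Omega> f (tau p x1 x2))" L \<kappa> t
    using G_lip \<kappa> L_lt rec by unfold_locales auto
  have t_lim: "t \<longlonglongrightarrow> tbar"
    using tbar by (rule LIMSEQ_fixed_point)
  moreover have "uniform_limit K (\<lambda>n x. if tau p x1 x2 x < t n then (0::real) else 1)
      (\<lambda>x. if tau p x1 x2 x < tbar then 0 else 1) sequentially"
    if "compact K" "K \<subseteq> \<Omega> - {x. tau p x1 x2 x = tbar}" for K
    using that t_lim continuous_on_tau[OF p_pos]
    by (intro uniform_limit_threshold_indicator) auto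
  ultimately show ?thesis by blast
qed

end
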